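(* Let $\mathcal{C}_1,\dots,\mathcal{C}_K$ be a partition of $\mathcal{V}=\{v_1,\dots,v_N\}$ into nonempty sets and define $\mathbf{H}\in\mathbb{R}^{N\times K}$ by $H_{ij}=1/\sqrt{|\mathcal{C}_j|}$ if $v_i\in\mathcal{C}_j$ and $H_{ij}=0$ otherwise. Let $\mathbf{R}\in\{0,1\}^{N\times N}$ be the symmetric adjacency matrix of a representation graph on $\mathcal{V}$. If $\mathbf{R}\left(\mathbf{I}-\frac1N\mathbf{1}\mathbf{1}^\intercal\right)\mathbf{H}=\mathbf{0}$, then $$\frac{|\mathcal{C}_k\cap\mathcal{N}_{\mathcal{R}}(i)|}{|\mathcal{C}_k|}=\frac{|\mathcal{N}_{\mathcal{R}}(i)|}{N}\quad\text{for all }k\in[K],\ i\in[N].$$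
   Context: $\mathbf{I}$ is the $N\times N$ identity and $\mathbf{1}$ the all-ones vector in $\mathbb{R}^N$. $\mathcal{N}_{\mathcal{R}}(i)=\{v_j:R_{ij}=1\}$ is the set of neighbours of $v_i$ in the representation graph (self-loops allowed). *)

theory Defs
  imports "HOL-Analysis.Analysis"
begin

text \<open>Vertices are indexed by a finite type 'n (so N = CARD('n)), clusters by a finite
type 'k (so K = CARD('k)).\<close>

definition is_partition :: "('k::finite \<Rightarrow> 'n::finite set) \<Rightarrow> bool" where
  "is_partition C \<longleftrightarrow> (\<forall>j. C j \<noteq> {}) \<and> (\<forall>j l. j \<noteq> l \<longrightarrow> C j \<inter> C l = {})
     \<and> (\<Union>j. C j) = UNIV"

definition cluster_matrix :: "('k::finite \<Rightarrow> 'n::finite set) \<Rightarrow> real^'k^'n" where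
  "cluster_matrix C = (\<chi> i j. if i \<in> C j then 1 / sqrt (real (card (C j))) else 0)"

definition ones_vec :: "real^'n::finite" where
  "ones_vec = (\<chi> i. 1)"

definition outer :: "real^'n::finite \<Rightarrow> real^'m::finite \<Rightarrow> real^'m^'n" where
  "outer u v = (\<chi> i j. u $ i * v $ j)"

definition nbrs :: "real^'n^'n \<Rightarrow> 'n::finite \<Rightarrow> 'n set" where
  "nbrs R i = {j. R $ i $ j = 1}"

end

theory Submission
  imports Defs
begin

text \<open>Column k of the centred indicator matrix is h_k - (sqrt |C_k| / N) 1, so entry (i, k)
of the hypothesis reads |C_k \<inter> N(i)| / sqrt |C_k| - sqrt |C_k| |N(i)| / N = 0; multiplying
by sqrt |C_k| / |C_k| gives the claim.\<close>

lemma sum_row_eq_card_nbrs: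
  fixes R :: "real^'n^'n::finite"
  assumes "\<forall>i j. R $ i $ j = 0 \<or> R $ i $ j = 1"
  shows "(\<Sum>j\<in>A. R $ i $ j) = real (card (A \<inter> nbrs R i))"
proof -
  have "(\<Sum>j\<in>A. R $ i $ j) = (\<Sum>j\<in>A. if R $ i $ j = 1 then 1 else 0)"
    by (rule sum.cong) (use assms in auto)
  also have "\<dots> = real (card {j\<in>A. R $ i $ j = 1})"
    by (simp add: sum.inter_filter[symmetric])
  also have "{j\<in>A. R $ i $ j = 1} = A \<inter> nbrs R i"
    by (auto simp: nbrs_def)
  finally show ?thesis .
qed

lemma matrix_mult_centering_entry:
  fixes A :: "real^'n::finite^'m::finite"
  shows "(A ** (mat 1 - c *\<^sub>R outer ones_vec ones_vec)) $ i $ j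
           = A $ i $ j - c * (\<Sum>l\<in>UNIV. A $ i $ l)"
proof -
  have "(A ** (mat 1 - c *\<^sub>R outer ones_vec ones_vec)) $ i $ j
      = (\<Sum>l\<in>UNIV. (if l = j then A $ i $ l else 0) - c * A $ i $ l)"
    by (simp add: matrix_matrix_mult_def mat_def outer_def ones_vec_def)
      (intro sum.cong, auto simp: right_diff_distrib)
  then show ?thesis
    by (simp add: sum_subtractf sum_distrib_left)
qed

lemma matrix_mult_cluster_matrix_entry:
  fixes M :: "real^'n::finite^'m::finite" and C :: "'k::finite \<Rightarrow> 'n set"
  shows "(M ** cluster_matrix C) $ i $ k = (\<Sum>j\<in>C k. M $ i $ j) / sqrt (real (card (C k)))"
  by (simp add: matrix_matrix_mult_def cluster_matrix_def if_distrib sum_divide_distrib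
      sum.inter_filter[symmetric] cong: if_cong)

theorem lemma1:
  fixes C :: "'k::finite \<Rightarrow> 'n::finite set" and R :: "real^'n^'n"
  assumes "is_partition C"
    and "\<forall>i j. R $ i $ j = 0 \<or> R $ i $ j = 1"
    and "transpose R = R"
    and "R ** (mat 1 - (1 / real CARD('n)) *\<^sub>R outer ones_vec ones_vec) ** cluster_matrix C = 0"
  shows "\<forall>k i. real (card (C k \<inter> nbrs R i)) / real (card (C k))
               = real (card (nbrs R i)) / real CARD('n)"
proof (intro allI)
  fix k i
  let ?N = "real CARD('n)" and ?c = "real (card (C k))" and ?d = "real (card (nbrs R i))"
  have "C k \<noteq> {}"
    using assms(1) by (simp add: is_partition_def)
  then have "?c > 0"
    by (simp add: card_gt_0_iff)
  have "(\<Sum>j\<in>C k. R $ i $ j - ?d / ?N) / sqrt ?c = 0"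
    using arg_cong[OF assms(4), of "\<lambda>M. M $ i $ k"]
    by (simp add: matrix_mult_cluster_matrix_entry matrix_mult_centering_entry
        sum_row_eq_card_nbrs[OF assms(2)])
  then have "real (card (C k \<inter> nbrs R i)) = ?c * ?d / ?N"
    using \<open>C k \<noteq> {}\<close> by (simp add: sum_subtractf sum_row_eq_card_nbrs[OF assms(2)])
  then show "real (card (C k \<inter> nbrs R i)) / ?c = ?d / ?N"
    using \<open>?c > 0\<close> \<open>C k \<noteq> {}\<close> by (simp add: field_simps)
qed

end
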